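(* Let $T_0$ and $T_0^+$ be the theories described in the context. Then: (1) If $M$ is a model of $T_0^+$, then $Q_0^M$, $Q_1^M$ and $Q_2^M$ are all non-empty, and $F_0^M$ and $F_3^M$ are onto (onto $Q_0^M$). (2) Every model $M$ of $T_0$ in which $Q_0^M\neq\emptyset$ and $Q_2^M\neq\emptyset$ and in which $F_0^M$ and $F_3^M$ are onto $Q_0^M$ can be extended to a model of $T_0^+$ with the same universe (i.e. by extending the partial functions); and every model of $T_0^+$ is a model of $T_0$. (3) There are models $M$ of $T_0$ with $Q_0^M\neq\emptyset$, $Q_2^M\neq\emptyset$ and $F_3^M$ onto $Q_0^M$ which cannot be extended to a model of $T_0^+$ with the same universe. (4) Every model of $T_0$ is a submodel of a model of $T_0^+$. (5) $T_0^+$ has the amalgamation property and the joint embedding property.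
   Context: The language consists of unary predicates $Q_0,Q_1,Q_2$ and function symbols $F_0,F_1,F_2,F_3$ ($F_1$ two-place, the others one-place), interpreted as possibly partial functions. $T_0$ is the (incomplete) theory saying: (i) $Q_0,Q_1,Q_2$ partition the universe; (ii) $F_0$ is a partial function from $Q_1$ to $Q_0$; (iii) $F_1$ is a partial two-place function from $Q_2\times Q_0$ to $Q_1$; (iv) $F_2$ is a partial function from $Q_0$ to $Q_2$; (v) $F_3$ is a partial function from $Q_2$ to $Q_0$; (vi) $F_0(F_1(z,x))=x$ for all $(z,x)$ in the domain of $F_1$; (vii) $F_3(F_2(x))=x$ for all $x$ (in the domain of $F_2$). $T_0^+$ is like $T_0$ but additionally requires $F_0,F_1,F_2,F_3$ to be total on $Q_1$, $Q_2\times Q_0$, $Q_0$, $Q_2$ respectively. Submodel convention: $M$ is a submodel of $N$ if $|M|\subseteq|N|$, $Q_i^M=Q_i^N\cap|M|$, and each partial function of $N$ extends the corresponding partial function of $M$ (the fact that a function is undefined at some argument in $M$ need not be preserved in $N$). *)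

theory Defs
  imports Main
begin

record 'a str =
  univ :: "'a set"
  Q0 :: "'a set"
  Q1 :: "'a set"
  Q2 :: "'a set"
  F0 :: "'a \<Rightarrow> 'a option"
  F1 :: "'a \<Rightarrow> 'a \<Rightarrow> 'a option"
  F2 :: "'a \<Rightarrow> 'a option"
  F3 :: "'a \<Rightarrow> 'a option"

definition T0 :: "'a str \<Rightarrow> bool" where
  "T0 M \<longleftrightarrow>
     univ M \<noteq> {} \<and>
     Q0 M \<union> Q1 M \<union> Q2 M = univ M \<and>
     Q0 M \<inter> Q1 M = {} \<and> Q0 M \<inter> Q2 M = {} \<and> Q1 M \<inter> Q2 M = {} \<and>
     (\<forall>x y. F0 M x = Some y \<longrightarrow> x \<in> Q1 M \<and> y \<in> Q0 M) \<and>
     (\<forall>z x y. F1 M z x = Some y \<longrightarrow> z \<in> Q2 M \<and> x \<in> Q0 M \<and> y \<in> Q1 M) \<and>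
     (\<forall>x y. F2 M x = Some y \<longrightarrow> x \<in> Q0 M \<and> y \<in> Q2 M) \<and>
     (\<forall>x y. F3 M x = Some y \<longrightarrow> x \<in> Q2 M \<and> y \<in> Q0 M) \<and>
     (\<forall>z x y. F1 M z x = Some y \<longrightarrow> F0 M y = Some x) \<and>
     (\<forall>x z. F2 M x = Some z \<longrightarrow> F3 M z = Some x)"

definition T0plus :: "'a str \<Rightarrow> bool" where
  "T0plus M \<longleftrightarrow> T0 M \<and>
     (\<forall>y\<in>Q1 M. F0 M y \<noteq> None) \<and>
     (\<forall>z\<in>Q2 M. \<forall>x\<in>Q0 M. F1 M z x \<noteq> None) \<and>
     (\<forall>x\<in>Q0 M. F2 M x \<noteq> None) \<and>
     (\<forall>z\<in>Q2 M. F3 M z \<noteq> None)"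

definition onto_F0 :: "'a str \<Rightarrow> bool" where
  "onto_F0 M \<longleftrightarrow> (\<forall>x\<in>Q0 M. \<exists>y. F0 M y = Some x)"

definition onto_F3 :: "'a str \<Rightarrow> bool" where
  "onto_F3 M \<longleftrightarrow> (\<forall>x\<in>Q0 M. \<exists>z. F3 M z = Some x)"

definition submodel :: "'a str \<Rightarrow> 'a str \<Rightarrow> bool" where
  "submodel M N \<longleftrightarrow>
     univ M \<subseteq> univ N \<and>
     Q0 M = Q0 N \<inter> univ M \<and> Q1 M = Q1 N \<inter> univ M \<and> Q2 M = Q2 N \<inter> univ M \<and>
     F0 M \<subseteq>\<^sub>m F0 N \<and> (\<forall>z. F1 M z \<subseteq>\<^sub>m F1 N z) \<and>
     F2 M \<subseteq>\<^sub>m F2 N \<and> F3 M \<subseteq>\<^sub>m F3 N"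

definition extends_same_univ :: "'a str \<Rightarrow> 'a str \<Rightarrow> bool" where
  "extends_same_univ M N \<longleftrightarrow> submodel M N \<and> univ N = univ M"

definition embedding :: "('a \<Rightarrow> 'b) \<Rightarrow> 'a str \<Rightarrow> 'b str \<Rightarrow> bool" where
  "embedding h M N \<longleftrightarrow>
     inj_on h (univ M) \<and> h ` univ M \<subseteq> univ N \<and>
     (\<forall>x\<in>univ M. (x \<in> Q0 M \<longleftrightarrow> h x \<in> Q0 N) \<and> (x \<in> Q1 M \<longleftrightarrow> h x \<in> Q1 N)
                  \<and> (x \<in> Q2 M \<longleftrightarrow> h x \<in> Q2 N)) \<and>
     (\<forall>x y. F0 M x = Some y \<longrightarrow> F0 N (h x) = Some (h y)) \<and>
     (\<forall>z x y. F1 M z x = Some y \<longrightarrow> F1 N (h z) (h x) = Some (h y)) \<and>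
     (\<forall>x y. F2 M x = Some y \<longrightarrow> F2 N (h x) = Some (h y)) \<and>
     (\<forall>x y. F3 M x = Some y \<longrightarrow> F3 N (h x) = Some (h y))"

end

theory Submission
  imports Defs
begin

(*
  (1) In a model of T0+ every element of Q1 or Q2 has an image in Q0 under F0 or F3, so Q0 is
  non-empty; F2 and F1 then produce elements of Q2 and Q1, and the axioms F0 (F1 z x) = x and
  F3 (F2 x) = x make F0 and F3 onto Q0.
  (2) Conversely, if F0 and F3 are onto Q0, the missing values F1 z x and F2 x can be chosen among
  the F0- and F3-preimages of x, and the missing values of F0 and F3 can be any element of Q0.
  (3) On the universe {0, 1} with Q0 = {0}, Q2 = {1} and Q1 empty, no value is left for F1 1 0.
  (4) Adjoining fresh elements of Q0 and fresh F0- and F3-preimages of all elements of Q0 makes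
  (2) applicable.
  (5) Two models are glued along the images of a common total submodel M0. Because M0 is total, the
  functions of both models agree on the identified elements, so the union of their graphs is again
  a model of T0, which embeds into a model of T0+ by (4). Joint embedding is the disjoint case.
*)

lemma T0_partition:
  assumes "T0 M"
  shows "univ M \<noteq> {}" "Q0 M \<union> Q1 M \<union> Q2 M = univ M"
    "Q0 M \<inter> Q1 M = {}" "Q0 M \<inter> Q2 M = {}" "Q1 M \<inter> Q2 M = {}"
  using assms unfolding T0_def by blast+

lemma
  assumes "T0 M"
  shows T0_F0D: "F0 M x = Some y \<Longrightarrow> x \<in> Q1 M \<and> y \<in> Q0 M"
    and T0_F1D: "F1 M z x = Some y \<Longrightarrow> z \<in> Q2 M \<and> x \<in> Q0 M \<and> y \<in> Q1 M"
    and T0_F2D: "F2 M x = Some y \<Longrightarrow> x \<in> Q0 M \<and> y \<in> Q2 M"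
    and T0_F3D: "F3 M x = Some y \<Longrightarrow> x \<in> Q2 M \<and> y \<in> Q0 M"
    and T0_F0_F1: "F1 M z x = Some y \<Longrightarrow> F0 M y = Some x"
    and T0_F3_F2: "F2 M x = Some y \<Longrightarrow> F3 M y = Some x"
  using assms unfolding T0_def by blast+

lemma T0_None:
  assumes "T0 M"
  shows "x \<notin> Q1 M \<Longrightarrow> F0 M x = None" "z \<notin> Q2 M \<or> x \<notin> Q0 M \<Longrightarrow> F1 M z x = None"
    "x \<notin> Q0 M \<Longrightarrow> F2 M x = None" "x \<notin> Q2 M \<Longrightarrow> F3 M x = None"
  using T0_F0D[OF assms, of x] T0_F1D[OF assms, of z x] T0_F2D[OF assms, of x] T0_F3D[OF assms, of x]
  by (meson not_Some_eq)+

lemma T0_sorts_subset: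
  assumes "T0 M"
  shows "Q0 M \<subseteq> univ M" "Q1 M \<subseteq> univ M" "Q2 M \<subseteq> univ M"
  using T0_partition(2)[OF assms] by auto

lemma T0_dom_subset:
  assumes "T0 M"
  shows "dom (F0 M) \<subseteq> univ M" "dom (case_prod (F1 M)) \<subseteq> univ M \<times> univ M"
    "dom (F2 M) \<subseteq> univ M" "dom (F3 M) \<subseteq> univ M"
  using T0_sorts_subset[OF assms]
  by (auto dest!: T0_F0D[OF assms] T0_F1D[OF assms] T0_F2D[OF assms] T0_F3D[OF assms])

lemma T0_values_in_univ:
  assumes "T0 M"
  shows "set_option (F0 M x) \<subseteq> univ M" "set_option (F1 M z x) \<subseteq> univ M"
    "set_option (F2 M x) \<subseteq> univ M" "set_option (F3 M x) \<subseteq> univ M"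
  using T0_sorts_subset[OF assms]
  by (auto dest!: T0_F0D[OF assms] T0_F1D[OF assms] T0_F2D[OF assms] T0_F3D[OF assms])

lemma T0plus_total:
  assumes "T0plus M"
  shows "y \<in> Q1 M \<Longrightarrow> \<exists>x. F0 M y = Some x"
    "z \<in> Q2 M \<Longrightarrow> x \<in> Q0 M \<Longrightarrow> \<exists>y. F1 M z x = Some y"
    "x \<in> Q0 M \<Longrightarrow> \<exists>z. F2 M x = Some z"
    "z \<in> Q2 M \<Longrightarrow> \<exists>x. F3 M z = Some x"
  using assms unfolding T0plus_def by blast+

lemma T0plus_imp_T0: "T0plus M \<Longrightarrow> T0 M"
  unfolding T0plus_def by simp

lemma T0plus_sorts_nonempty:
  assumes "T0plus M"
  shows "Q0 M \<noteq> {}" "Q1 M \<noteq> {}" "Q2 M \<noteq> {}"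
proof -
  have T: "T0 M" using assms by (rule T0plus_imp_T0)
  show Q0: "Q0 M \<noteq> {}"
  proof
    assume "Q0 M = {}"
    moreover obtain u where "u \<in> univ M" using T0_partition(1)[OF T] by blast
    ultimately have "u \<in> Q1 M \<or> u \<in> Q2 M" using T0_partition(2)[OF T] by blast
    then obtain v where "F0 M u = Some v \<or> F3 M u = Some v" using T0plus_total[OF assms] by blast
    then have "v \<in> Q0 M" using T0_F0D[OF T] T0_F3D[OF T] by blast
    with \<open>Q0 M = {}\<close> show False by simp
  qed
  then obtain x where x: "x \<in> Q0 M" by blast
  then obtain z where "F2 M x = Some z" using T0plus_total(3)[OF assms] by blast
  then have z: "z \<in> Q2 M" using T0_F2D[OF T] by blast
  then show "Q2 M \<noteq> {}" by blast
  obtain y where "F1 M z x = Some y" using T0plus_total(2)[OF assms z x] by blast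
  then show "Q1 M \<noteq> {}" using T0_F1D[OF T] by blast
qed

lemma T0plus_onto:
  assumes "T0plus M"
  shows "onto_F0 M" "onto_F3 M"
proof -
  have T: "T0 M" using assms by (rule T0plus_imp_T0)
  obtain z where z: "z \<in> Q2 M" using T0plus_sorts_nonempty(3)[OF assms] by blast
  show "onto_F0 M"
    unfolding onto_F0_def
    using T0plus_total(2)[OF assms z] T0_F0_F1[OF T] by blast
  show "onto_F3 M"
    unfolding onto_F3_def
    using T0plus_total(3)[OF assms] T0_F3_F2[OF T] by blast
qed

definition completion :: "'a str \<Rightarrow> 'a str" where
  "completion M = M\<lparr>
     F0 := (\<lambda>_. Some (SOME x. x \<in> Q0 M)) |` Q1 M ++ F0 M,
     F1 := (\<lambda>z. (\<lambda>x. Some (SOME y. F0 M y = Some x)) |` (if z \<in> Q2 M then Q0 M else {}) ++ F1 M z),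
     F2 := (\<lambda>x. Some (SOME z. F3 M z = Some x)) |` Q0 M ++ F2 M,
     F3 := (\<lambda>_. Some (SOME x. x \<in> Q0 M)) |` Q2 M ++ F3 M\<rparr>"

lemma extends_same_univ_completion:
  assumes "T0 M"
  shows "extends_same_univ M (completion M)"
  using T0_sorts_subset[OF assms]
  unfolding extends_same_univ_def submodel_def completion_def by auto

lemma T0plus_completion:
  assumes T: "T0 M" and "Q0 M \<noteq> {}" "onto_F0 M" "onto_F3 M"
  shows "T0plus (completion M)"
proof -
  have c: "(SOME x. x \<in> Q0 M) \<in> Q0 M" using \<open>Q0 M \<noteq> {}\<close> by (simp add: some_in_eq)
  have F0_pre: "F0 M (SOME y. F0 M y = Some x) = Some x" if "x \<in> Q0 M" for x
    using \<open>onto_F0 M\<close> that unfolding onto_F0_def by (meson someI_ex)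
  have F3_pre: "F3 M (SOME z. F3 M z = Some x) = Some x" if "x \<in> Q0 M" for x
    using \<open>onto_F3 M\<close> that unfolding onto_F3_def by (meson someI_ex)
  show ?thesis
    using T c F0_pre F3_pre unfolding T0plus_def T0_def completion_def
    by (auto simp: map_add_Some_iff restrict_map_def split: if_splits)
qed

definition two_point_model :: "nat str" where
  "two_point_model = \<lparr>univ = {0, 1}, Q0 = {0}, Q1 = {}, Q2 = {1},
     F0 = (\<lambda>_. None), F1 = (\<lambda>_ _. None), F2 = (\<lambda>_. None), F3 = [1 \<mapsto> 0]\<rparr>"

lemma two_point_model_T0_onto_F3:
  "T0 two_point_model" "Q0 two_point_model \<noteq> {}" "Q2 two_point_model \<noteq> {}"
  "onto_F3 two_point_model"
  unfolding T0_def onto_F3_def two_point_model_def by auto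

lemma two_point_model_not_completable:
  "\<not> (\<exists>N. T0plus N \<and> extends_same_univ two_point_model N)"
proof
  assume "\<exists>N. T0plus N \<and> extends_same_univ two_point_model N"
  then obtain N where N: "T0plus N" "extends_same_univ two_point_model N" by blast
  have "univ N = {0, 1}" "Q0 N \<inter> {0, 1} = {0}" "Q1 N \<inter> {0, 1} = {}" "Q2 N \<inter> {0, 1} = {1}"
    using N(2) unfolding extends_same_univ_def submodel_def two_point_model_def
    by (simp_all only: str.simps)
  then have sorts: "univ N = {0, 1}" "0 \<in> Q0 N" "1 \<in> Q2 N" "Q1 N \<inter> {0, 1} = {}"
    by blast+
  have T: "T0 N" using N(1) by (rule T0plus_imp_T0)
  obtain y where "F1 N 1 0 = Some y" using T0plus_total(2)[OF N(1) sorts(3,2)] by blast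
  then have "y \<in> Q1 N \<inter> univ N" using T0_F1D[OF T] T0_sorts_subset(2)[OF T] by blast
  with sorts show False by simp
qed

(* Tag 0 carries M; the (a, 1) are new elements of Q0, and (a, k + 2) and (a, k + 4) are fresh
   F0- and F3-preimages of the element (a, k) of Q0. *)
definition preimage_extension :: "'a str \<Rightarrow> ('a \<times> nat) str" where
  "preimage_extension M = \<lparr>
     univ = univ M \<times> {0} \<union> Q0 M \<times> {2, 4} \<union> UNIV \<times> {1, 3, 5},
     Q0 = Q0 M \<times> {0} \<union> UNIV \<times> {1},
     Q1 = Q1 M \<times> {0} \<union> Q0 M \<times> {2} \<union> UNIV \<times> {3},
     Q2 = Q2 M \<times> {0} \<union> Q0 M \<times> {4} \<union> UNIV \<times> {5},
     F0 = (\<lambda>(a, n). if n = 0 then map_option (\<lambda>b. (b, 0)) (F0 M a)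
                   else if (a, n) \<in> Q0 M \<times> {2} \<union> UNIV \<times> {3} then Some (a, n - 2) else None),
     F1 = (\<lambda>(z, m) (x, n). if m = 0 \<and> n = 0 then map_option (\<lambda>b. (b, 0)) (F1 M z x) else None),
     F2 = (\<lambda>(a, n). if n = 0 then map_option (\<lambda>b. (b, 0)) (F2 M a) else None),
     F3 = (\<lambda>(a, n). if n = 0 then map_option (\<lambda>b. (b, 0)) (F3 M a)
                   else if (a, n) \<in> Q0 M \<times> {4} \<union> UNIV \<times> {5} then Some (a, n - 4) else None)\<rparr>"

lemma T0_preimage_extension:
  assumes "T0 M"
  shows "T0 (preimage_extension M)"
  using assms
  unfolding T0_def preimage_extension_def
  by (auto split: if_splits prod.splits)

lemma preimage_extension_onto:
  "Q0 (preimage_extension M) \<noteq> {}" "onto_F0 (preimage_extension M)" "onto_F3 (preimage_extension M)"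
proof -
  have "F0 (preimage_extension M) (a, n + 2) = Some (a, n)"
    and "F3 (preimage_extension M) (a, n + 4) = Some (a, n)"
    if "(a, n) \<in> Q0 (preimage_extension M)" for a n
    using that by (auto simp: preimage_extension_def)
  then show "onto_F0 (preimage_extension M)" "onto_F3 (preimage_extension M)"
    unfolding onto_F0_def onto_F3_def by fast+
  show "Q0 (preimage_extension M) \<noteq> {}" by (simp add: preimage_extension_def)
qed

lemma embedding_preimage_extension:
  assumes "T0 M"
  shows "embedding (\<lambda>a. (a, 0)) M (preimage_extension M)"
  using assms
  unfolding embedding_def preimage_extension_def inj_on_def
  by auto

lemma embedding_comp:
  assumes "embedding h M N" "embedding k N P"
  shows "embedding (k \<circ> h) M P"
proof -
  have "inj_on (k \<circ> h) (univ M)" "(k \<circ> h) ` univ M \<subseteq> univ P"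
    using assms unfolding embedding_def by (auto intro: comp_inj_on inj_on_subset)
  moreover have "h x \<in> univ N" if "x \<in> univ M" for x
    using assms(1) that unfolding embedding_def by blast
  ultimately show ?thesis
    using assms unfolding embedding_def by simp
qed

lemma submodel_embedding:
  assumes "submodel M N"
  shows "embedding id M N"
proof -
  have map_le_Some: "g x = Some y" if "f \<subseteq>\<^sub>m g" "f x = Some y" for f g :: "'a \<Rightarrow> 'a option" and x y
    using that unfolding map_le_def by (metis domI)
  show ?thesis
    using assms map_le_Some unfolding submodel_def embedding_def by (auto; blast)
qed

lemma T0_embeds_into_T0plus:
  fixes M :: "'a str"
  assumes "T0 M"
  shows "\<exists>(N :: ('a \<times> nat) str) h. T0plus N \<and> embedding h M N"
proof -
  let ?M' = "preimage_extension M"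
  have "T0 ?M'" using assms by (rule T0_preimage_extension)
  then have "T0plus (completion ?M')" "submodel ?M' (completion ?M')"
    using T0plus_completion preimage_extension_onto extends_same_univ_completion
    unfolding extends_same_univ_def by blast+
  moreover have "embedding (\<lambda>a. (a, 0)) M ?M'"
    using assms by (rule embedding_preimage_extension)
  ultimately show ?thesis
    using embedding_comp submodel_embedding by fastforce
qed

definition fun_of_rel :: "('a \<Rightarrow> 'b \<Rightarrow> bool) \<Rightarrow> 'a \<Rightarrow> 'b option" where
  "fun_of_rel R x = (if \<exists>y. R x y then Some (SOME y. R x y) else None)"

lemma fun_of_rel_eq_Some_iff:
  assumes "\<And>y y'. R x y \<Longrightarrow> R x y' \<Longrightarrow> y = y'"
  shows "fun_of_rel R x = Some y \<longleftrightarrow> R x y"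
  using assms someI[of "R x"] unfolding fun_of_rel_def by auto

definition glued_map ::
  "('k1 \<Rightarrow> 'k) \<Rightarrow> ('v1 \<Rightarrow> 'v) \<Rightarrow> ('k1 \<Rightarrow> 'v1 option) \<Rightarrow>
   ('k2 \<Rightarrow> 'k) \<Rightarrow> ('v2 \<Rightarrow> 'v) \<Rightarrow> ('k2 \<Rightarrow> 'v2 option) \<Rightarrow> 'k \<Rightarrow> 'v option" where
  "glued_map k1 v1 f1 k2 v2 f2 = fun_of_rel (\<lambda>K V.
     (\<exists>a b. f1 a = Some b \<and> K = k1 a \<and> V = v1 b) \<or> (\<exists>a b. f2 a = Some b \<and> K = k2 a \<and> V = v2 b))"

lemma glued_map_commute: "glued_map k1 v1 f1 k2 v2 f2 = glued_map k2 v2 f2 k1 v1 f1"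
  unfolding glued_map_def by (simp add: disj_commute)

lemma glued_map_eq_Some_iff:
  assumes "inj_on k1 (dom f1)" "inj_on k2 (dom f2)"
    and "\<And>a b a' b'. f1 a = Some b \<Longrightarrow> f2 a' = Some b' \<Longrightarrow> k1 a = k2 a' \<Longrightarrow> v1 b = v2 b'"
  shows "glued_map k1 v1 f1 k2 v2 f2 K = Some V \<longleftrightarrow>
    (\<exists>a b. f1 a = Some b \<and> K = k1 a \<and> V = v1 b) \<or> (\<exists>a b. f2 a = Some b \<and> K = k2 a \<and> V = v2 b)"
  unfolding glued_map_def
proof (rule fun_of_rel_eq_Some_iff)
  have inj1: "a = a'" if "f1 a = Some b" "f1 a' = Some b'" "k1 a = k1 a'" for a a' b b'
    using that inj_onD[OF assms(1)] by blast
  have inj2: "a = a'" if "f2 a = Some b" "f2 a' = Some b'" "k2 a = k2 a'" for a a' b b'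
    using that inj_onD[OF assms(2)] by blast
  show "V = V'"
    if "(\<exists>a b. f1 a = Some b \<and> K = k1 a \<and> V = v1 b) \<or> (\<exists>a b. f2 a = Some b \<and> K = k2 a \<and> V = v2 b)"
      and "(\<exists>a b. f1 a = Some b \<and> K = k1 a \<and> V' = v1 b) \<or> (\<exists>a b. f2 a = Some b \<and> K = k2 a \<and> V' = v2 b)"
    for V V'
    using that inj1 inj2 assms(3) by (elim disjE exE conjE) (metis option.inject)+
qed

definition glue :: "('b \<Rightarrow> 'd) \<Rightarrow> 'b str \<Rightarrow> ('c \<Rightarrow> 'd) \<Rightarrow> 'c str \<Rightarrow> 'd str" where
  "glue h1 M1 h2 M2 = \<lparr>univ = h1 ` univ M1 \<union> h2 ` univ M2,
     Q0 = h1 ` Q0 M1 \<union> h2 ` Q0 M2, Q1 = h1 ` Q1 M1 \<union> h2 ` Q1 M2, Q2 = h1 ` Q2 M1 \<union> h2 ` Q2 M2,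
     F0 = glued_map h1 h1 (F0 M1) h2 h2 (F0 M2),
     F1 = curry (glued_map (map_prod h1 h1) h1 (case_prod (F1 M1)) (map_prod h2 h2) h2 (case_prod (F1 M2))),
     F2 = glued_map h1 h1 (F2 M1) h2 h2 (F2 M2),
     F3 = glued_map h1 h1 (F3 M1) h2 h2 (F3 M2)\<rparr>"

definition glue_compatible :: "('b \<Rightarrow> 'd) \<Rightarrow> 'b str \<Rightarrow> ('c \<Rightarrow> 'd) \<Rightarrow> 'c str \<Rightarrow> bool" where
  "glue_compatible h1 M1 h2 M2 \<longleftrightarrow> inj_on h1 (univ M1) \<and> inj_on h2 (univ M2) \<and>
     (\<forall>a\<in>univ M1. \<forall>b\<in>univ M2. h1 a = h2 b \<longrightarrow>
        (a \<in> Q0 M1 \<longleftrightarrow> b \<in> Q0 M2) \<and> (a \<in> Q1 M1 \<longleftrightarrow> b \<in> Q1 M2) \<and> (a \<in> Q2 M1 \<longleftrightarrow> b \<in> Q2 M2)) \<and>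
     (\<forall>a b a' b'. F0 M1 a = Some b \<longrightarrow> F0 M2 a' = Some b' \<longrightarrow> h1 a = h2 a' \<longrightarrow> h1 b = h2 b') \<and>
     (\<forall>z x b z' x' b'. F1 M1 z x = Some b \<longrightarrow> F1 M2 z' x' = Some b' \<longrightarrow>
        h1 z = h2 z' \<longrightarrow> h1 x = h2 x' \<longrightarrow> h1 b = h2 b') \<and>
     (\<forall>a b a' b'. F2 M1 a = Some b \<longrightarrow> F2 M2 a' = Some b' \<longrightarrow> h1 a = h2 a' \<longrightarrow> h1 b = h2 b') \<and>
     (\<forall>a b a' b'. F3 M1 a = Some b \<longrightarrow> F3 M2 a' = Some b' \<longrightarrow> h1 a = h2 a' \<longrightarrow> h1 b = h2 b')"

lemma glue_commute: "glue h1 M1 h2 M2 = glue h2 M2 h1 M1"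
  unfolding glue_def by (simp add: Un_commute glued_map_commute[of h1] glued_map_commute[of "map_prod h1 h1"])

lemma glue_compatible_commute: "glue_compatible h1 M1 h2 M2 \<longleftrightarrow> glue_compatible h2 M2 h1 M1"
  unfolding glue_compatible_def by (intro iffI; elim conjE; intro conjI; metis)

lemma glue_compatibleD:
  assumes "glue_compatible h1 M1 h2 M2"
  shows "inj_on h1 (univ M1)" "inj_on h2 (univ M2)"
    and "a \<in> univ M1 \<Longrightarrow> b \<in> univ M2 \<Longrightarrow> h1 a = h2 b \<Longrightarrow> a \<in> Q0 M1 \<longleftrightarrow> b \<in> Q0 M2"
    and "a \<in> univ M1 \<Longrightarrow> b \<in> univ M2 \<Longrightarrow> h1 a = h2 b \<Longrightarrow> a \<in> Q1 M1 \<longleftrightarrow> b \<in> Q1 M2"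
    and "a \<in> univ M1 \<Longrightarrow> b \<in> univ M2 \<Longrightarrow> h1 a = h2 b \<Longrightarrow> a \<in> Q2 M1 \<longleftrightarrow> b \<in> Q2 M2"
  using assms unfolding glue_compatible_def by blast+

lemma glue_F_eq_Some_iff:
  assumes "T0 M1" "T0 M2" and C: "glue_compatible h1 M1 h2 M2"
  shows "F0 (glue h1 M1 h2 M2) u = Some v \<longleftrightarrow>
      (\<exists>a b. F0 M1 a = Some b \<and> u = h1 a \<and> v = h1 b) \<or> (\<exists>a b. F0 M2 a = Some b \<and> u = h2 a \<and> v = h2 b)"
      (is "_ \<longleftrightarrow> ?F0")
    and "F1 (glue h1 M1 h2 M2) u w = Some v \<longleftrightarrow>
      (\<exists>z x b. F1 M1 z x = Some b \<and> u = h1 z \<and> w = h1 x \<and> v = h1 b) \<or>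
      (\<exists>z x b. F1 M2 z x = Some b \<and> u = h2 z \<and> w = h2 x \<and> v = h2 b)"
      (is "_ \<longleftrightarrow> ?F1")
    and "F2 (glue h1 M1 h2 M2) u = Some v \<longleftrightarrow>
      (\<exists>a b. F2 M1 a = Some b \<and> u = h1 a \<and> v = h1 b) \<or> (\<exists>a b. F2 M2 a = Some b \<and> u = h2 a \<and> v = h2 b)"
      (is "_ \<longleftrightarrow> ?F2")
    and "F3 (glue h1 M1 h2 M2) u = Some v \<longleftrightarrow>
      (\<exists>a b. F3 M1 a = Some b \<and> u = h1 a \<and> v = h1 b) \<or> (\<exists>a b. F3 M2 a = Some b \<and> u = h2 a \<and> v = h2 b)"
      (is "_ \<longleftrightarrow> ?F3")
proof -
  note inj = glue_compatibleD(1,2)[OF C]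
  note dom1 = T0_dom_subset[OF assms(1)] and dom2 = T0_dom_subset[OF assms(2)]
  have agree: "\<And>a b a' b'. F0 M1 a = Some b \<Longrightarrow> F0 M2 a' = Some b' \<Longrightarrow> h1 a = h2 a' \<Longrightarrow> h1 b = h2 b'"
    "\<And>p b p' b'. case_prod (F1 M1) p = Some b \<Longrightarrow> case_prod (F1 M2) p' = Some b' \<Longrightarrow>
       map_prod h1 h1 p = map_prod h2 h2 p' \<Longrightarrow> h1 b = h2 b'"
    "\<And>a b a' b'. F2 M1 a = Some b \<Longrightarrow> F2 M2 a' = Some b' \<Longrightarrow> h1 a = h2 a' \<Longrightarrow> h1 b = h2 b'"
    "\<And>a b a' b'. F3 M1 a = Some b \<Longrightarrow> F3 M2 a' = Some b' \<Longrightarrow> h1 a = h2 a' \<Longrightarrow> h1 b = h2 b'"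
    using C unfolding glue_compatible_def by auto
  show "F0 (glue h1 M1 h2 M2) u = Some v \<longleftrightarrow> ?F0"
    unfolding glue_def str.select_convs
    by (rule glued_map_eq_Some_iff[OF inj_on_subset[OF inj(1) dom1(1)] inj_on_subset[OF inj(2) dom2(1)] agree(1)])
  show "F2 (glue h1 M1 h2 M2) u = Some v \<longleftrightarrow> ?F2"
    unfolding glue_def str.select_convs
    by (rule glued_map_eq_Some_iff[OF inj_on_subset[OF inj(1) dom1(3)] inj_on_subset[OF inj(2) dom2(3)] agree(3)])
  show "F3 (glue h1 M1 h2 M2) u = Some v \<longleftrightarrow> ?F3"
    unfolding glue_def str.select_convs
    by (rule glued_map_eq_Some_iff[OF inj_on_subset[OF inj(1) dom1(4)] inj_on_subset[OF inj(2) dom2(4)] agree(4)])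
  have "inj_on (map_prod h1 h1) (dom (case_prod (F1 M1)))" "inj_on (map_prod h2 h2) (dom (case_prod (F1 M2)))"
    using inj_on_subset[OF map_prod_inj_on[OF inj(1) inj(1)] dom1(2)]
      inj_on_subset[OF map_prod_inj_on[OF inj(2) inj(2)] dom2(2)] .
  from glued_map_eq_Some_iff[OF this agree(2)]
  show "F1 (glue h1 M1 h2 M2) u w = Some v \<longleftrightarrow> ?F1"
    unfolding glue_def by auto
qed

lemma image_union_mem_iff:
  assumes "inj_on h1 U1" "A1 \<subseteq> U1" "A2 \<subseteq> U2" "x \<in> U1"
    and "\<And>a b. a \<in> U1 \<Longrightarrow> b \<in> U2 \<Longrightarrow> h1 a = h2 b \<Longrightarrow> a \<in> A1 \<longleftrightarrow> b \<in> A2"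
  shows "h1 x \<in> h1 ` A1 \<union> h2 ` A2 \<longleftrightarrow> x \<in> A1"
  using assms by (auto simp: inj_on_eq_iff subset_iff)

lemma image_union_disjoint:
  assumes "inj_on h1 U1" "inj_on h2 U2" "A1 \<subseteq> U1" "B1 \<subseteq> U1" "A2 \<subseteq> U2" "B2 \<subseteq> U2"
    and "A1 \<inter> B1 = {}" "A2 \<inter> B2 = {}"
    and "\<And>a b. a \<in> U1 \<Longrightarrow> b \<in> U2 \<Longrightarrow> h1 a = h2 b \<Longrightarrow> a \<in> A1 \<longleftrightarrow> b \<in> A2"
    and "\<And>a b. a \<in> U1 \<Longrightarrow> b \<in> U2 \<Longrightarrow> h1 a = h2 b \<Longrightarrow> a \<in> B1 \<longleftrightarrow> b \<in> B2"
  shows "(h1 ` A1 \<union> h2 ` A2) \<inter> (h1 ` B1 \<union> h2 ` B2) = {}"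
proof -
  have "h1 a \<notin> h1 ` B1 \<union> h2 ` B2" if "a \<in> A1" for a
  proof -
    have "a \<in> U1" "a \<notin> B1" using that assms(3,7) by auto
    then show ?thesis using image_union_mem_iff[OF assms(1,4,6) _ assms(10)] by blast
  qed
  moreover have "h2 b \<notin> h2 ` B2 \<union> h1 ` B1" if "b \<in> A2" for b
  proof -
    have "b \<in> U2" "b \<notin> B2" using that assms(5,8) by auto
    moreover have "\<And>b a. b \<in> U2 \<Longrightarrow> a \<in> U1 \<Longrightarrow> h2 b = h1 a \<Longrightarrow> b \<in> B2 \<longleftrightarrow> a \<in> B1"
      using assms(10) by metis
    ultimately show ?thesis using image_union_mem_iff[OF assms(2,6,4)] by blast
  qed
  ultimately show ?thesis by blast
qed

lemma glue_sorts:
  "univ (glue h1 M1 h2 M2) = h1 ` univ M1 \<union> h2 ` univ M2"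
  "Q0 (glue h1 M1 h2 M2) = h1 ` Q0 M1 \<union> h2 ` Q0 M2"
  "Q1 (glue h1 M1 h2 M2) = h1 ` Q1 M1 \<union> h2 ` Q1 M2"
  "Q2 (glue h1 M1 h2 M2) = h1 ` Q2 M1 \<union> h2 ` Q2 M2"
  unfolding glue_def by simp_all

lemma T0_glue:
  assumes T: "T0 M1" "T0 M2" and C: "glue_compatible h1 M1 h2 M2"
  shows "T0 (glue h1 M1 h2 M2)"
proof -
  note inj = glue_compatibleD(1,2)[OF C] and sorts = glue_compatibleD(3-5)[OF C]
  note sub1 = T0_sorts_subset[OF T(1)] and sub2 = T0_sorts_subset[OF T(2)]
  have "Q0 (glue h1 M1 h2 M2) \<inter> Q1 (glue h1 M1 h2 M2) = {}"
    unfolding glue_sorts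
    by (rule image_union_disjoint[OF inj sub1(1,2) sub2(1,2) T0_partition(3)[OF T(1)] T0_partition(3)[OF T(2)] sorts(1,2)])
  moreover have "Q0 (glue h1 M1 h2 M2) \<inter> Q2 (glue h1 M1 h2 M2) = {}"
    unfolding glue_sorts
    by (rule image_union_disjoint[OF inj sub1(1,3) sub2(1,3) T0_partition(4)[OF T(1)] T0_partition(4)[OF T(2)] sorts(1,3)])
  moreover have "Q1 (glue h1 M1 h2 M2) \<inter> Q2 (glue h1 M1 h2 M2) = {}"
    unfolding glue_sorts
    by (rule image_union_disjoint[OF inj sub1(2,3) sub2(2,3) T0_partition(5)[OF T(1)] T0_partition(5)[OF T(2)] sorts(2,3)])
  moreover have "Q0 (glue h1 M1 h2 M2) \<union> Q1 (glue h1 M1 h2 M2) \<union> Q2 (glue h1 M1 h2 M2) = univ (glue h1 M1 h2 M2)"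
    using T0_partition(2)[OF T(1)] T0_partition(2)[OF T(2)] unfolding glue_sorts by blast
  moreover have "univ (glue h1 M1 h2 M2) \<noteq> {}"
    using T0_partition(1)[OF T(1)] unfolding glue_sorts by blast
  moreover have "x \<in> Q1 (glue h1 M1 h2 M2) \<and> y \<in> Q0 (glue h1 M1 h2 M2)"
    if "F0 (glue h1 M1 h2 M2) x = Some y" for x y
    using that T0_F0D[OF T(1)] T0_F0D[OF T(2)] unfolding glue_F_eq_Some_iff[OF T C] glue_sorts by blast
  moreover have "z \<in> Q2 (glue h1 M1 h2 M2) \<and> x \<in> Q0 (glue h1 M1 h2 M2) \<and> y \<in> Q1 (glue h1 M1 h2 M2)"
    if "F1 (glue h1 M1 h2 M2) z x = Some y" for z x y
    using that T0_F1D[OF T(1)] T0_F1D[OF T(2)] unfolding glue_F_eq_Some_iff[OF T C] glue_sorts by blast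
  moreover have "x \<in> Q0 (glue h1 M1 h2 M2) \<and> y \<in> Q2 (glue h1 M1 h2 M2)"
    if "F2 (glue h1 M1 h2 M2) x = Some y" for x y
    using that T0_F2D[OF T(1)] T0_F2D[OF T(2)] unfolding glue_F_eq_Some_iff[OF T C] glue_sorts by blast
  moreover have "x \<in> Q2 (glue h1 M1 h2 M2) \<and> y \<in> Q0 (glue h1 M1 h2 M2)"
    if "F3 (glue h1 M1 h2 M2) x = Some y" for x y
    using that T0_F3D[OF T(1)] T0_F3D[OF T(2)] unfolding glue_F_eq_Some_iff[OF T C] glue_sorts by blast
  moreover have "F0 (glue h1 M1 h2 M2) y = Some x" if "F1 (glue h1 M1 h2 M2) z x = Some y" for z x y
    using that T0_F0_F1[OF T(1)] T0_F0_F1[OF T(2)] unfolding glue_F_eq_Some_iff[OF T C] by blast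
  moreover have "F3 (glue h1 M1 h2 M2) y = Some x" if "F2 (glue h1 M1 h2 M2) x = Some y" for x y
    using that T0_F3_F2[OF T(1)] T0_F3_F2[OF T(2)] unfolding glue_F_eq_Some_iff[OF T C] by blast
  ultimately show ?thesis
    unfolding T0_def by blast
qed

lemma embedding_glue_left:
  assumes T: "T0 M1" "T0 M2" and C: "glue_compatible h1 M1 h2 M2"
  shows "embedding h1 M1 (glue h1 M1 h2 M2)"
  unfolding embedding_def
proof (intro conjI ballI allI impI)
  note sorts = glue_compatibleD(3-5)[OF C]
  note sub1 = T0_sorts_subset[OF T(1)] and sub2 = T0_sorts_subset[OF T(2)]
  show "inj_on h1 (univ M1)" by (rule glue_compatibleD(1)[OF C])
  show "h1 ` univ M1 \<subseteq> univ (glue h1 M1 h2 M2)" unfolding glue_sorts by blast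
  fix x assume x: "x \<in> univ M1"
  show "x \<in> Q0 M1 \<longleftrightarrow> h1 x \<in> Q0 (glue h1 M1 h2 M2)"
    unfolding glue_sorts using image_union_mem_iff[OF glue_compatibleD(1)[OF C] sub1(1) sub2(1) x sorts(1)] by blast
  show "x \<in> Q1 M1 \<longleftrightarrow> h1 x \<in> Q1 (glue h1 M1 h2 M2)"
    unfolding glue_sorts using image_union_mem_iff[OF glue_compatibleD(1)[OF C] sub1(2) sub2(2) x sorts(2)] by blast
  show "x \<in> Q2 M1 \<longleftrightarrow> h1 x \<in> Q2 (glue h1 M1 h2 M2)"
    unfolding glue_sorts using image_union_mem_iff[OF glue_compatibleD(1)[OF C] sub1(3) sub2(3) x sorts(3)] by blast
qed (unfold glue_F_eq_Some_iff[OF T C], blast+)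

lemma embedding_glue_right:
  assumes "T0 M1" "T0 M2" "glue_compatible h1 M1 h2 M2"
  shows "embedding h2 M2 (glue h1 M1 h2 M2)"
  using embedding_glue_left[of M2 M1 h2 h1] assms glue_compatible_commute glue_commute by metis

lemma glue_embeds_into_T0plus:
  fixes h1 :: "'b \<Rightarrow> 'd" and h2 :: "'c \<Rightarrow> 'd"
  assumes "T0 M1" "T0 M2" "glue_compatible h1 M1 h2 M2"
  shows "\<exists>(N :: ('d \<times> nat) str) h. T0plus N \<and> embedding (h \<circ> h1) M1 N \<and> embedding (h \<circ> h2) M2 N"
proof -
  obtain N :: "('d \<times> nat) str" and h where N: "T0plus N" "embedding h (glue h1 M1 h2 M2) N"
    using T0_embeds_into_T0plus[OF T0_glue[OF assms]] by blast
  have "embedding (h \<circ> h1) M1 N" "embedding (h \<circ> h2) M2 N"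
    using embedding_comp[OF embedding_glue_left[OF assms] N(2)]
      embedding_comp[OF embedding_glue_right[OF assms] N(2)] .
  with N(1) show ?thesis by blast
qed

lemma joint_embedding:
  fixes M1 :: "'b str" and M2 :: "'c str"
  assumes "T0 M1" "T0 M2"
  shows "\<exists>(N :: (('b + 'c) \<times> nat) str) g1 g2. T0plus N \<and> embedding g1 M1 N \<and> embedding g2 M2 N"
proof -
  have "glue_compatible Inl M1 Inr M2" unfolding glue_compatible_def by simp
  then show ?thesis using glue_embeds_into_T0plus[OF assms] by blast
qed

definition amalgam_map :: "('a \<Rightarrow> 'b) \<Rightarrow> ('a \<Rightarrow> 'c) \<Rightarrow> 'a set \<Rightarrow> 'c \<Rightarrow> 'b + 'c" where
  "amalgam_map f1 f2 A y = (if y \<in> f2 ` A then Inl (f1 (inv_into A f2 y)) else Inr y)"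

lemma amalgam_map_image:
  "inj_on f2 A \<Longrightarrow> x \<in> A \<Longrightarrow> amalgam_map f1 f2 A (f2 x) = Inl (f1 x)"
  unfolding amalgam_map_def by simp

lemma amalgam_map_eq_Inl:
  assumes "amalgam_map f1 f2 A y = Inl a"
  shows "\<exists>x\<in>A. y = f2 x \<and> a = f1 x"
proof -
  have y: "y \<in> f2 ` A"
    using assms unfolding amalgam_map_def by (metis Inl_Inr_False)
  with assms have "a = f1 (inv_into A f2 y)"
    unfolding amalgam_map_def by simp
  then show ?thesis using inv_into_into[OF y] f_inv_into_f[OF y] by metis
qed

lemma amalgam_map_eq_Inr: "amalgam_map f1 f2 A y = Inr b \<Longrightarrow> y = b"
  unfolding amalgam_map_def by (simp split: if_splits)

lemma inj_amalgam_map: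
  assumes "inj_on f1 A"
  shows "inj (amalgam_map f1 f2 A)"
proof (rule injI)
  fix y y' assume eq: "amalgam_map f1 f2 A y = amalgam_map f1 f2 A y'"
  show "y = y'"
  proof (cases "amalgam_map f1 f2 A y")
    case (Inl a)
    obtain x where "x \<in> A" "y = f2 x" "a = f1 x"
      using amalgam_map_eq_Inl[OF Inl] by blast
    moreover obtain x' where "x' \<in> A" "y' = f2 x'" "a = f1 x'"
      using amalgam_map_eq_Inl Inl eq by metis
    ultimately show ?thesis using assms by (simp add: inj_on_eq_iff)
  next
    case (Inr b)
    then show ?thesis using amalgam_map_eq_Inr eq by metis
  qed
qed

lemma embedding_T0plus_values:
  assumes "T0plus M" "T0 N" "embedding f M N" "x \<in> univ M"
  shows "F0 N (f x) = map_option f (F0 M x)"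
    and "z \<in> univ M \<Longrightarrow> F1 N (f z) (f x) = map_option f (F1 M z x)"
    and "F2 N (f x) = map_option f (F2 M x)"
    and "F3 N (f x) = map_option f (F3 M x)"
proof -
  have T: "T0 M" using assms(1) by (rule T0plus_imp_T0)
  have sorts: "x \<in> Q0 M \<longleftrightarrow> f x \<in> Q0 N" "x \<in> Q1 M \<longleftrightarrow> f x \<in> Q1 N" "x \<in> Q2 M \<longleftrightarrow> f x \<in> Q2 N"
    if "x \<in> univ M" for x
    using assms(3) that unfolding embedding_def by blast+
  note emb = assms(3)[unfolded embedding_def, THEN conjunct2, THEN conjunct2, THEN conjunct2]
  show "F0 N (f x) = map_option f (F0 M x)"
  proof (cases "x \<in> Q1 M")
    case True
    then obtain y where "F0 M x = Some y" using T0plus_total(1)[OF assms(1)] by blast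
    with emb show ?thesis by simp
  next
    case False
    then show ?thesis
      using T0_None(1)[OF T] T0_None(1)[OF assms(2)] sorts(2)[OF assms(4)] by simp
  qed
  show "F1 N (f z) (f x) = map_option f (F1 M z x)" if "z \<in> univ M"
  proof (cases "z \<in> Q2 M \<and> x \<in> Q0 M")
    case True
    then obtain y where "F1 M z x = Some y" using T0plus_total(2)[OF assms(1)] by blast
    with emb show ?thesis by simp
  next
    case False
    then show ?thesis
      using T0_None(2)[OF T] T0_None(2)[OF assms(2)] sorts(1)[OF assms(4)] sorts(3)[OF that] by auto
  qed
  show "F2 N (f x) = map_option f (F2 M x)"
  proof (cases "x \<in> Q0 M")
    case True
    then obtain y where "F2 M x = Some y" using T0plus_total(3)[OF assms(1)] by blast
    with emb show ?thesis by simp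
  next
    case False
    then show ?thesis
      using T0_None(3)[OF T] T0_None(3)[OF assms(2)] sorts(1)[OF assms(4)] by simp
  qed
  show "F3 N (f x) = map_option f (F3 M x)"
  proof (cases "x \<in> Q2 M")
    case True
    then obtain y where "F3 M x = Some y" using T0plus_total(4)[OF assms(1)] by blast
    with emb show ?thesis by simp
  next
    case False
    then show ?thesis
      using T0_None(4)[OF T] T0_None(4)[OF assms(2)] sorts(3)[OF assms(4)] by simp
  qed
qed

lemma glue_compatible_amalgam:
  assumes P0: "T0plus M0" and T: "T0 M1" "T0 M2"
    and E: "embedding f1 M0 M1" "embedding f2 M0 M2"
  shows "glue_compatible Inl M1 (amalgam_map f1 f2 (univ M0)) M2"
proof -
  let ?g = "amalgam_map f1 f2 (univ M0)"
  have inj: "inj_on f1 (univ M0)" "inj_on f2 (univ M0)" using E unfolding embedding_def by blast+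
  have ident: "\<exists>x\<in>univ M0. a = f1 x \<and> b = f2 x" if "Inl a = ?g b" for a b
    using amalgam_map_eq_Inl[OF that[symmetric]] by blast
  have agree: "Inl b = ?g b'"
    if "map_option f1 u = Some b" "map_option f2 u = Some b'" "set_option u \<subseteq> univ M0" for u b b'
    using that amalgam_map_image[OF inj(2), of _ f1] by auto
  note val1 = embedding_T0plus_values[OF P0 T(1) E(1)] and val2 = embedding_T0plus_values[OF P0 T(2) E(2)]
  note in_univ = T0_values_in_univ[OF T0plus_imp_T0[OF P0]]
  have "inj_on ?g (univ M2)"
    using inj_amalgam_map[OF inj(1)] by (rule inj_on_subset) simp
  moreover have "(a \<in> Q0 M1 \<longleftrightarrow> b \<in> Q0 M2) \<and> (a \<in> Q1 M1 \<longleftrightarrow> b \<in> Q1 M2) \<and> (a \<in> Q2 M1 \<longleftrightarrow> b \<in> Q2 M2)"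
    if "Inl a = ?g b" for a b
    using ident[OF that] E unfolding embedding_def by auto
  moreover have "Inl b = ?g b'" if asm: "F0 M1 a = Some b" "F0 M2 a' = Some b'" "Inl a = ?g a'" for a b a' b'
  proof -
    obtain x where "x \<in> univ M0" "a = f1 x" "a' = f2 x" using ident[OF asm(3)] by blast
    then show ?thesis using agree[of "F0 M0 x"] asm(1,2) val1(1) val2(1) in_univ(1) by simp
  qed
  moreover have "Inl b = ?g b'"
    if asm: "F1 M1 z a = Some b" "F1 M2 z' a' = Some b'" "Inl z = ?g z'" "Inl a = ?g a'" for z a b z' a' b'
  proof -
    obtain w where "w \<in> univ M0" "z = f1 w" "z' = f2 w" using ident[OF asm(3)] by blast
    moreover obtain x where "x \<in> univ M0" "a = f1 x" "a' = f2 x" using ident[OF asm(4)] by blast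
    ultimately show ?thesis using agree[of "F1 M0 w x"] asm(1,2) val1(2) val2(2) in_univ(2) by simp
  qed
  moreover have "Inl b = ?g b'" if asm: "F2 M1 a = Some b" "F2 M2 a' = Some b'" "Inl a = ?g a'" for a b a' b'
  proof -
    obtain x where "x \<in> univ M0" "a = f1 x" "a' = f2 x" using ident[OF asm(3)] by blast
    then show ?thesis using agree[of "F2 M0 x"] asm(1,2) val1(3) val2(3) in_univ(3) by simp
  qed
  moreover have "Inl b = ?g b'" if asm: "F3 M1 a = Some b" "F3 M2 a' = Some b'" "Inl a = ?g a'" for a b a' b'
  proof -
    obtain x where "x \<in> univ M0" "a = f1 x" "a' = f2 x" using ident[OF asm(3)] by blast
    then show ?thesis using agree[of "F3 M0 x"] asm(1,2) val1(4) val2(4) in_univ(4) by simp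
  qed
  ultimately show ?thesis
    unfolding glue_compatible_def by simp
qed

lemma amalgamation:
  fixes M0 :: "'a str" and M1 :: "'b str" and M2 :: "'c str"
  assumes "T0plus M0" "T0 M1" "T0 M2" "embedding f1 M0 M1" "embedding f2 M0 M2"
  shows "\<exists>(N :: (('b + 'c) \<times> nat) str) g1 g2. T0plus N \<and> embedding g1 M1 N \<and> embedding g2 M2 N \<and>
           (\<forall>x\<in>univ M0. g1 (f1 x) = g2 (f2 x))"
proof -
  let ?g = "amalgam_map f1 f2 (univ M0)"
  obtain N :: "(('b + 'c) \<times> nat) str" and h
    where "T0plus N" "embedding (h \<circ> Inl) M1 N" "embedding (h \<circ> ?g) M2 N"
    using glue_embeds_into_T0plus[OF assms(2,3) glue_compatible_amalgam[OF assms]] by blast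
  moreover have "\<forall>x\<in>univ M0. (h \<circ> Inl) (f1 x) = (h \<circ> ?g) (f2 x)"
  proof -
    have "inj_on f2 (univ M0)" using assms(5) unfolding embedding_def by blast
    then show ?thesis by (simp add: amalgam_map_image)
  qed
  ultimately show ?thesis by blast
qed

theorem claim2p4:
  shows
  "(\<forall>M :: 'a str. T0plus M \<longrightarrow>
      Q0 M \<noteq> {} \<and> Q1 M \<noteq> {} \<and> Q2 M \<noteq> {} \<and> onto_F0 M \<and> onto_F3 M)
 \<and> ((\<forall>M :: 'a str. T0 M \<and> Q0 M \<noteq> {} \<and> Q2 M \<noteq> {} \<and> onto_F0 M \<and> onto_F3 M \<longrightarrow>
        (\<exists>N. T0plus N \<and> extends_same_univ M N))
    \<and> (\<forall>M :: 'a str. T0plus M \<longrightarrow> T0 M))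
 \<and> (\<exists>M :: nat str. T0 M \<and> Q0 M \<noteq> {} \<and> Q2 M \<noteq> {} \<and> onto_F3 M \<and>
        \<not> (\<exists>N. T0plus N \<and> extends_same_univ M N))
 \<and> (\<forall>M :: 'a str. T0 M \<longrightarrow>
        (\<exists>(N :: ('a \<times> nat) str) h. T0plus N \<and> embedding h M N))
 \<and> (\<forall>(M0 :: 'a str) (M1 :: 'b str) (M2 :: 'c str) f1 f2.
        T0plus M0 \<and> T0plus M1 \<and> T0plus M2 \<and> embedding f1 M0 M1 \<and> embedding f2 M0 M2 \<longrightarrow>
        (\<exists>(N :: (('b + 'c) \<times> nat) str) g1 g2.
           T0plus N \<and> embedding g1 M1 N \<and> embedding g2 M2 N \<and>
           (\<forall>x\<in>univ M0. g1 (f1 x) = g2 (f2 x))))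
 \<and> (\<forall>(M1 :: 'b str) (M2 :: 'c str). T0plus M1 \<and> T0plus M2 \<longrightarrow>
        (\<exists>(N :: (('b + 'c) \<times> nat) str) g1 g2.
           T0plus N \<and> embedding g1 M1 N \<and> embedding g2 M2 N))"
proof ((intro conjI; (intro allI impI)?), goal_cases)
  case (1 M)
  then show ?case using T0plus_sorts_nonempty[OF 1] T0plus_onto[OF 1] by simp
next
  case (2 M)
  then have "T0 M" "Q0 M \<noteq> {}" "onto_F0 M" "onto_F3 M" by simp_all
  then show ?case using T0plus_completion extends_same_univ_completion by blast
next
  case (3 M)
  then show ?case by (rule T0plus_imp_T0)
next
  case 4
  show ?case using two_point_model_T0_onto_F3 two_point_model_not_completable by blast
next
  case (5 M)
  then show ?case by (rule T0_embeds_into_T0plus)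
next
  case (6 M0 M1 M2 f1 f2)
  then have "T0plus M0" "T0 M1" "T0 M2" "embedding f1 M0 M1" "embedding f2 M0 M2"
    by (simp_all add: T0plus_imp_T0)
  then show ?case by (rule amalgamation)
next
  case (7 M1 M2)
  then have "T0 M1" "T0 M2" by (simp_all add: T0plus_imp_T0)
  then show ?case by (rule joint_embedding)
qed

end
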